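(* Let $\mathbf{k}=(k_1,\ldots,k_n)$ be a sequence of positive integers. Then in $\mathfrak{h}_t^1$, $$\sum_{\sigma\in S_n}z_{k_{\sigma(1)}}\cdots z_{k_{\sigma(n)}}=\sum_{\Pi=\{P_1,\ldots,P_i\}\in\mathcal{P}_n}c_\Pi(t)\,z_{\mathbf{k},P_1}\ast_t\cdots\ast_t z_{\mathbf{k},P_i},$$ where $z_{\mathbf{k},P_j}=z_{\sum_{l\in P_j}k_l}$.
   Context: $t$ is a formal variable; $\mathfrak{h}_t=\mathbb{Q}[t]\langle x,y\rangle$ is the noncommutative polynomial algebra in letters $x,y$ ($1$ = empty word), $\mathfrak{h}^1_t=\mathbb{Q}[t]+\mathfrak{h}_ty$, $z_k=x^{k-1}y$. For a word $w$, $\delta(w)=1$ if $w=1$ and $0$ otherwise. The $t$-harmonic product $\ast_t$ on $\mathfrak{h}^1_t$ is the $\mathbb{Q}[t]$-bilinear product with $1\ast_t w=w\ast_t1=w$ and, for words $w_1,w_2\in\mathfrak{h}^1_t$ and $k,l\ge1$, $z_kw_1\ast_t z_lw_2=z_k(w_1\ast_t z_lw_2)+z_l(z_kw_1\ast_t w_2)+(1-2t)z_{k+l}(w_1\ast_t w_2)+[1-\delta(w_1)\delta(w_2)](t^2-t)x^{k+l}(w_1\ast_t w_2)$; it is commutative and associative. $S_n$ is the symmetric group, $\mathcal{P}_n$ the set of all set partitions of $\{1,\ldots,n\}$. For $m\ge1$, $c_m(t)=(m-1)!\,[t^m-(t-1)^m]$, and for $\Pi=\{P_1,\ldots,P_i\}\in\mathcal{P}_n$,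 $c_\Pi(t)=\prod_{j=1}^ic_{\#P_j}(t)$. *)

theory Defs
  imports "HOL-Library.Poly_Mapping" "HOL-Computational_Algebra.Polynomial"
    "HOL-Library.Disjoint_Sets" "HOL-Combinatorics.Permutations"
begin

datatype letter = X | Y

abbreviation tvar :: "rat poly" where "tvar \<equiv> [:0, 1:]"

text \<open>Elements of h_t = Q[t]<x,y>: finitely supported maps from words to Q[t].\<close>
type_synonym ht = "letter list \<Rightarrow>\<^sub>0 rat poly"

definition word :: "letter list \<Rightarrow> ht" where
  "word w = Poly_Mapping.single w 1"

definition hsmult :: "rat poly \<Rightarrow> ht \<Rightarrow> ht" where
  "hsmult c f = Poly_Mapping.map (\<lambda>a. c * a) f"

definition hprep :: "letter list \<Rightarrow> ht \<Rightarrow> ht" where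
  "hprep u f = (\<Sum>w\<in>Poly_Mapping.keys f. Poly_Mapping.single (u @ w) (Poly_Mapping.lookup f w))"

definition zl :: "nat \<Rightarrow> letter list" where
  "zl k = replicate (k - 1) X @ [Y]"

definition zword :: "nat list \<Rightarrow> letter list" where
  "zword ks = concat (map zl ks)"

text \<open>Decoding a word of h^1 (ending in y or empty) into its index sequence.\<close>
fun dec_aux :: "nat \<Rightarrow> letter list \<Rightarrow> nat list" where
  "dec_aux c [] = []"
| "dec_aux c (X # w) = dec_aux (Suc c) w"
| "dec_aux c (Y # w) = Suc c # dec_aux 0 w"

definition dec :: "letter list \<Rightarrow> nat list" where
  "dec w = dec_aux 0 w"

text \<open>The t-harmonic product of two words of h^1, given by their index sequences
  (z_k w_1 corresponds to k # w_1).\<close>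
fun tharm :: "nat list \<Rightarrow> nat list \<Rightarrow> ht" where
  "tharm [] v = word (zword v)"
| "tharm u [] = word (zword u)"
| "tharm (k # u) (l # v) =
     hprep (zl k) (tharm u (l # v))
   + hprep (zl l) (tharm (k # u) v)
   + hsmult (1 - 2 * tvar) (hprep (zl (k + l)) (tharm u v))
   + (if u = [] \<and> v = [] then 0
      else hsmult (tvar ^ 2 - tvar) (hprep (replicate (k + l) X) (tharm u v)))"

definition tprod :: "ht \<Rightarrow> ht \<Rightarrow> ht" (infixl "\<star>\<^sub>t" 70) where
  "f \<star>\<^sub>t g = (\<Sum>u\<in>Poly_Mapping.keys f. \<Sum>v\<in>Poly_Mapping.keys g.
      hsmult (Poly_Mapping.lookup f u * Poly_Mapping.lookup g v) (tharm (dec u) (dec v)))"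

definition tprod_list :: "ht list \<Rightarrow> ht" where
  "tprod_list fs = foldr (\<star>\<^sub>t) fs (word [])"

definition cm :: "nat \<Rightarrow> rat poly" where
  "cm m = of_nat (fact (m - 1)) * (tvar ^ m - (tvar - 1) ^ m)"

definition cPi :: "nat set set \<Rightarrow> rat poly" where
  "cPi P = (\<Prod>B\<in>P. cm (card B))"

text \<open>Blocks of a set partition listed by increasing minimum (order is irrelevant
  since the product is commutative, but this makes the iterated product explicit).\<close>
definition blocks_list :: "nat set set \<Rightarrow> nat set list" where
  "blocks_list P = map (\<lambda>m. THE B. B \<in> P \<and> Min B = m) (sorted_list_of_set (Min ` P))"

text \<open>z_{k,B} = z_{sum of k_l over l in B} (indices 0-based).\<close>
definition zblock :: "nat list \<Rightarrow> nat set \<Rightarrow> ht" where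
  "zblock ks B = word (zl (\<Sum>l\<in>B. ks ! l))"

end

theory Submission
  imports Defs "HOL-Combinatorics.Multiset_Permutations"
begin

text \<open>
  Write Z(A) = zperm ks A for the sum of the words z_{k_{a_1}} ... z_{k_{a_m}} over all
  orderings (a_1, ..., a_m) of a finite index set A, and R(A) = partition_sum ks A for the
  right-hand side with the set partitions of A in place of those of {0, ..., n - 1}.
  Splitting off the block B containing a0 = min A gives R(A) = sum of c_|B| z_{k,B} *_t R(A - B)
  over all B with a0 in B and B a subset of A, so by induction on A it suffices that Z
  satisfies the same recursion.

  Expanding z_b *_t Z(A - B) by the defining recursion of *_t, the terms whose first letter
  comes from Z(A - B) collapse by induction to the sum of z_{k_a} Z(A - {a}) over a /= a0.
  In the remaining terms z_b has absorbed none, one or two further letters; regrouped by the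
  resulting block D, they give z_{k,D} Z(A - D) = zlead ks A D with coefficient
  c_d + (1 - 2t)(d - 1) c_{d-1} + (t^2 - t)(d - 1)(d - 2) c_{d-2}, where d = |D|.
  This is 1 for d = 1 and 0 otherwise, because t and t - 1 are the roots of
  T^2 + (1 - 2t) T + t^2 - t. What is left is the first-letter expansion of Z(A).
\<close>

lemma lookup_hsmult [simp]: "Poly_Mapping.lookup (hsmult c f) w = c * Poly_Mapping.lookup f w"
  unfolding hsmult_def by (simp add: Poly_Mapping.map.rep_eq when_def)

lemma hsmult_add_right: "hsmult c (f + g) = hsmult c f + hsmult c g"
  by (rule poly_mapping_eqI) (simp add: lookup_add algebra_simps)

lemma hsmult_add_left: "hsmult (c + d) f = hsmult c f + hsmult d f"
  by (rule poly_mapping_eqI) (simp add: lookup_add algebra_simps)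

lemma hsmult_zero [simp]: "hsmult c 0 = 0" "hsmult 0 f = 0"
  by (rule poly_mapping_eqI, simp)+

lemma hsmult_one [simp]: "hsmult 1 f = f"
  by (rule poly_mapping_eqI) simp

lemma hsmult_hsmult: "hsmult c (hsmult d f) = hsmult (c * d) f"
  by (rule poly_mapping_eqI) (simp add: algebra_simps)

lemma hsmult_sum_right: "hsmult c (sum f A) = (\<Sum>x\<in>A. hsmult c (f x))"
  by (rule poly_mapping_eqI) (simp add: lookup_sum sum_distrib_left)

lemma hsmult_sum_left: "hsmult (sum f A) g = (\<Sum>x\<in>A. hsmult (f x) g)"
  by (rule poly_mapping_eqI) (simp add: lookup_sum sum_distrib_right)

lemma hsmult_commute: "hsmult c (hsmult d f) = hsmult d (hsmult c f)"
  by (simp add: hsmult_hsmult mult.commute)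

lemma sum_hsmult_const: "(\<Sum>x\<in>A. hsmult c f) = hsmult (of_nat (card A) * c) f"
  by (simp add: hsmult_sum_left[symmetric])

definition linext :: "(letter list \<Rightarrow> ht) \<Rightarrow> ht \<Rightarrow> ht" where
  "linext T f = (\<Sum>v\<in>Poly_Mapping.keys f. hsmult (Poly_Mapping.lookup f v) (T v))"

lemma linext_superset:
  assumes "finite S" "Poly_Mapping.keys f \<subseteq> S"
  shows "linext T f = (\<Sum>v\<in>S. hsmult (Poly_Mapping.lookup f v) (T v))"
  unfolding linext_def by (rule sum.mono_neutral_left) (use assms in \<open>auto simp: in_keys_iff\<close>)

lemma linext_add: "linext T (f + g) = linext T f + linext T g"
proof -
  let ?S = "Poly_Mapping.keys f \<union> Poly_Mapping.keys g"
  have "linext T (f + g) = (\<Sum>v\<in>?S. hsmult (Poly_Mapping.lookup (f + g) v) (T v))"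
    by (rule linext_superset) (use keys_add[of f g] in auto)
  also have "\<dots> = (\<Sum>v\<in>?S. hsmult (Poly_Mapping.lookup f v) (T v))
                + (\<Sum>v\<in>?S. hsmult (Poly_Mapping.lookup g v) (T v))"
    by (simp add: lookup_add hsmult_add_left sum.distrib)
  also have "\<dots> = linext T f + linext T g"
    by (subst (1 2) linext_superset[of ?S]) auto
  finally show ?thesis .
qed

lemma linext_zero [simp]: "linext T 0 = 0"
  by (simp add: linext_def)

lemma linext_sum: "linext T (sum f A) = (\<Sum>x\<in>A. linext T (f x))"
  by (induction A rule: infinite_finite_induct) (simp_all add: linext_add)

lemma linext_hsmult: "linext T (hsmult c f) = hsmult c (linext T f)"
proof -
  have "linext T (hsmult c f)
      = (\<Sum>v\<in>Poly_Mapping.keys f. hsmult (Poly_Mapping.lookup (hsmult c f) v) (T v))"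
    by (rule linext_superset) (auto simp: in_keys_iff)
  then show ?thesis by (simp add: linext_def hsmult_sum_right hsmult_hsmult)
qed

lemma linext_word [simp]: "linext T (word w) = T w"
  by (simp add: linext_def word_def)

lemma hprep_eq_linext: "hprep u = linext (\<lambda>v. word (u @ v))"
proof
  fix f
  have "hsmult c (word w) = Poly_Mapping.single w c" for c w
    by (rule poly_mapping_eqI) (simp add: word_def lookup_single when_def)
  then show "hprep u f = linext (\<lambda>v. word (u @ v)) f"
    by (simp add: hprep_def linext_def)
qed

lemma hprep_sum: "hprep u (sum f A) = (\<Sum>x\<in>A. hprep u (f x))"
  by (simp add: hprep_eq_linext linext_sum)

lemma hprep_hsmult: "hprep u (hsmult c f) = hsmult c (hprep u f)"
  by (simp add: hprep_eq_linext linext_hsmult)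

lemma tprod_word_left: "word w \<star>\<^sub>t f = linext (\<lambda>v. tharm (dec w) (dec v)) f"
  by (simp add: tprod_def word_def linext_def)

abbreviation zw :: "nat list \<Rightarrow> ht" where
  "zw ks \<equiv> word (zword ks)"

lemma hprep_zl_zw: "hprep (zl k) (zw ks) = zw (k # ks)"
  by (simp add: hprep_eq_linext zword_def)

lemma hprep_replicate_X_zw:
  assumes "k > 0"
  shows "hprep (replicate n X) (zw (k # ks)) = zw ((n + k) # ks)"
proof -
  have "replicate n X @ zl k = zl (n + k)"
    using assms by (simp add: zl_def replicate_add[symmetric])
  then show ?thesis
    by (simp add: hprep_eq_linext zword_def flip: append.assoc)
qed

lemma dec_aux_replicate_X: "dec_aux c (replicate n X @ Y # w) = Suc (c + n) # dec_aux 0 w"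
  by (induction n arbitrary: c) auto

lemma dec_zword: "\<forall>k\<in>set ks. k > 0 \<Longrightarrow> dec (zword ks) = ks"
  by (induction ks) (simp_all add: dec_def zword_def zl_def dec_aux_replicate_X)

lemma dec_zl: "k > 0 \<Longrightarrow> dec (zl k) = [k]"
  using dec_zword[of "[k]"] by (simp add: zword_def)

text \<open>
  In the (t^2 - t) term of the recursion the prefix x^(k + l) merges with the next letter
  z_m into z_{k + l + m}; this needs m > 0, as zl 0 = zl 1.
\<close>

lemma tharm_singleton_Cons:
  assumes "\<forall>m\<in>set ks. m > 0"
  shows "tharm [k] (l # ks) = zw (k # l # ks) + hprep (zl l) (tharm [k] ks)
     + hsmult (1 - 2 * tvar) (zw ((k + l) # ks))
     + (case ks of [] \<Rightarrow> 0 | m # ms \<Rightarrow> hsmult (tvar ^ 2 - tvar) (zw ((k + l + m) # ms)))"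
  using assms by (cases ks) (simp_all add: hprep_zl_zw hprep_replicate_X_zw)

section \<open>Symmetrised words\<close>

lemma sum_permutations_of_set_Cons:
  assumes "finite A" "A \<noteq> {}"
  shows "(\<Sum>xs\<in>permutations_of_set A. f xs) = (\<Sum>a\<in>A. \<Sum>xs\<in>permutations_of_set (A - {a}). f (a # xs))"
proof -
  have "(\<Sum>xs\<in>permutations_of_set A. f xs)
      = (\<Sum>a\<in>A. \<Sum>xs\<in>(#) a ` permutations_of_set (A - {a}). f xs)"
    unfolding permutations_of_set_nonempty[OF assms(2)]
    by (rule sum.UNION_disjoint) (use assms in auto)
  also have "\<dots> = (\<Sum>a\<in>A. \<Sum>xs\<in>permutations_of_set (A - {a}). f (a # xs))"
    by (rule sum.cong[OF refl], subst sum.reindex) auto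
  finally show ?thesis .
qed

lemma sum_permutations_of_set_case:
  assumes "finite A"
  shows "(\<Sum>xs\<in>permutations_of_set A. case xs of [] \<Rightarrow> 0 | a # ys \<Rightarrow> f a ys)
       = (\<Sum>a\<in>A. \<Sum>ys\<in>permutations_of_set (A - {a}). f a ys)"
  using assms by (cases "A = {}") (simp_all add: sum_permutations_of_set_Cons)

definition zperm :: "nat list \<Rightarrow> nat set \<Rightarrow> ht" where
  "zperm ks A = (\<Sum>xs\<in>permutations_of_set A. zw (map ((!) ks) xs))"

lemma zperm_empty [simp]: "zperm ks {} = zw []"
  by (simp add: zperm_def)

lemma zperm_rec:
  assumes "finite A" "A \<noteq> {}"
  shows "zperm ks A = (\<Sum>a\<in>A. hprep (zl (ks ! a)) (zperm ks (A - {a})))"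
  using assms by (simp add: zperm_def sum_permutations_of_set_Cons hprep_sum hprep_zl_zw)

lemma tprod_zl_zperm:
  assumes "b > 0" "\<forall>i\<in>A. ks ! i > 0"
  shows "word (zl b) \<star>\<^sub>t zperm ks A = (\<Sum>xs\<in>permutations_of_set A. tharm [b] (map ((!) ks) xs))"
proof -
  have "dec (zword (map ((!) ks) xs)) = map ((!) ks) xs" if "xs \<in> permutations_of_set A" for xs
    using that assms(2) by (intro dec_zword) (auto dest: permutations_of_setD)
  then show ?thesis
    unfolding zperm_def tprod_word_left linext_sum linext_word dec_zl[OF assms(1)] by simp
qed

lemma tprod_zl_zperm_rec:
  assumes "b > 0" "finite A" and pos: "\<forall>i\<in>A. ks ! i > 0"
  shows "word (zl b) \<star>\<^sub>t zperm ks A = hprep (zl b) (zperm ks A)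
     + (\<Sum>a\<in>A. hprep (zl (ks ! a)) (word (zl b) \<star>\<^sub>t zperm ks (A - {a})))
     + hsmult (1 - 2 * tvar) (\<Sum>a\<in>A. hprep (zl (b + ks ! a)) (zperm ks (A - {a})))
     + hsmult (tvar ^ 2 - tvar) (\<Sum>a\<in>A. \<Sum>a'\<in>A - {a}.
         hprep (zl (b + ks ! a + ks ! a')) (zperm ks (A - {a} - {a'})))"
proof (cases "A = {}")
  case True
  then show ?thesis
    unfolding tprod_zl_zperm[OF assms(1) pos] by (simp add: zperm_def hprep_zl_zw)
next
  case False
  let ?w = "map ((!) ks)"
  have expand: "tharm [b] (ks ! a # ?w xs) = zw (b # ks ! a # ?w xs)
      + hprep (zl (ks ! a)) (tharm [b] (?w xs)) + hsmult (1 - 2 * tvar) (zw ((b + ks ! a) # ?w xs))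
      + (case xs of [] \<Rightarrow> 0 | a' # ys \<Rightarrow> hsmult (tvar ^ 2 - tvar) (zw ((b + ks ! a + ks ! a') # ?w ys)))"
    if "xs \<in> permutations_of_set (A - {a})" for a xs
  proof -
    have "\<forall>m\<in>set (?w xs). m > 0"
      using that pos by (auto dest: permutations_of_setD)
    from tharm_singleton_Cons[OF this] show ?thesis
      by (cases xs) simp_all
  qed
  have "word (zl b) \<star>\<^sub>t zperm ks A
      = (\<Sum>a\<in>A. \<Sum>xs\<in>permutations_of_set (A - {a}). tharm [b] (ks ! a # ?w xs))"
    using assms False by (simp add: tprod_zl_zperm sum_permutations_of_set_Cons)
  also have "\<dots> = (\<Sum>a\<in>A. \<Sum>xs\<in>permutations_of_set (A - {a}). zw (b # ks ! a # ?w xs))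
     + (\<Sum>a\<in>A. \<Sum>xs\<in>permutations_of_set (A - {a}). hprep (zl (ks ! a)) (tharm [b] (?w xs)))
     + (\<Sum>a\<in>A. \<Sum>xs\<in>permutations_of_set (A - {a}). hsmult (1 - 2 * tvar) (zw ((b + ks ! a) # ?w xs)))
     + (\<Sum>a\<in>A. \<Sum>xs\<in>permutations_of_set (A - {a}). case xs of [] \<Rightarrow> 0
         | a' # ys \<Rightarrow> hsmult (tvar ^ 2 - tvar) (zw ((b + ks ! a + ks ! a') # ?w ys)))"
    unfolding sum.distrib[symmetric] by (intro sum.cong refl) (erule expand)
  also have "(\<Sum>a\<in>A. \<Sum>xs\<in>permutations_of_set (A - {a}). zw (b # ks ! a # ?w xs))
      = hprep (zl b) (zperm ks A)"
    using assms False by (simp add: zperm_def sum_permutations_of_set_Cons hprep_sum hprep_zl_zw)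
  also have "(\<Sum>a\<in>A. \<Sum>xs\<in>permutations_of_set (A - {a}). hprep (zl (ks ! a)) (tharm [b] (?w xs)))
      = (\<Sum>a\<in>A. hprep (zl (ks ! a)) (word (zl b) \<star>\<^sub>t zperm ks (A - {a})))"
    using assms by (simp add: tprod_zl_zperm hprep_sum)
  also have "(\<Sum>a\<in>A. \<Sum>xs\<in>permutations_of_set (A - {a}). hsmult (1 - 2 * tvar) (zw ((b + ks ! a) # ?w xs)))
      = hsmult (1 - 2 * tvar) (\<Sum>a\<in>A. hprep (zl (b + ks ! a)) (zperm ks (A - {a})))"
    by (simp add: zperm_def hprep_sum hprep_zl_zw hsmult_sum_right)
  also have "(\<Sum>a\<in>A. \<Sum>xs\<in>permutations_of_set (A - {a}). case xs of [] \<Rightarrow> 0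
         | a' # ys \<Rightarrow> hsmult (tvar ^ 2 - tvar) (zw ((b + ks ! a + ks ! a') # ?w ys)))
      = hsmult (tvar ^ 2 - tvar) (\<Sum>a\<in>A. \<Sum>a'\<in>A - {a}.
         hprep (zl (b + ks ! a + ks ! a')) (zperm ks (A - {a} - {a'})))"
    using assms by (simp add: sum_permutations_of_set_case zperm_def hprep_sum hprep_zl_zw hsmult_sum_right)
  finally show ?thesis .
qed

section \<open>The coefficients c_m\<close>

lemma power_diff_recurrence:
  fixes x :: "'a::comm_ring_1"
  shows "(x ^ (j + 2) - (x - 1) ^ (j + 2)) + (1 - 2 * x) * (x ^ (j + 1) - (x - 1) ^ (j + 1))
         + (x ^ 2 - x) * (x ^ j - (x - 1) ^ j) = 0"
proof -
  \<comment> \<open>x and x - 1 are the roots of T^2 + (1 - 2x) T + (x^2 - x)\<close>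
  have factor: "y ^ (j + 2) + (1 - 2 * x) * y ^ (j + 1) + (x ^ 2 - x) * y ^ j
      = y ^ j * (y - x) * (y - (x - 1))" for y :: 'a
    by (simp add: power_add power2_eq_square algebra_simps)
  show ?thesis
    using factor[of x] factor[of "x - 1"] by (simp add: algebra_simps)
qed

lemma of_nat_mult_cm: "of_nat m * cm m = of_nat (fact m) * (tvar ^ m - (tvar - 1) ^ m)"
  by (cases m) (simp_all add: cm_def algebra_simps)

lemma cm_recurrence:
  assumes "d \<ge> 1"
  shows "cm d + (1 - 2 * tvar) * (of_nat (d - 1) * cm (d - 1))
       + (tvar ^ 2 - tvar) * (of_nat ((d - 1) * (d - 2)) * cm (d - 2)) = (if d = 1 then 1 else 0)"
proof (cases "d = 1")
  case True
  then show ?thesis by (simp add: cm_def)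
next
  case False
  define j where "j = d - 2"
  have d: "d = j + 2"
    using assms False by (simp add: j_def)
  define a :: "nat \<Rightarrow> rat poly" where "a i = tvar ^ i - (tvar - 1) ^ i" for i
  have "cm d = of_nat (fact (j + 1)) * a (j + 2)"
    by (simp add: d cm_def a_def)
  moreover have "of_nat (d - 1) * cm (d - 1) = of_nat (fact (j + 1)) * a (j + 1)"
    by (simp only: d of_nat_mult_cm a_def) simp
  moreover have "of_nat ((d - 1) * (d - 2)) * cm (d - 2) = of_nat (fact (j + 1)) * a j"
  proof -
    have "of_nat ((d - 1) * (d - 2)) * cm (d - 2) = of_nat (j + 1) * (of_nat j * cm j)"
      by (simp add: d algebra_simps)
    also have "\<dots> = of_nat (j + 1) * (of_nat (fact j) * a j)"
      by (simp only: of_nat_mult_cm a_def)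
    also have "\<dots> = of_nat (fact (j + 1)) * a j"
      by (simp add: mult.assoc distrib_right)
    finally show ?thesis .
  qed
  ultimately have "cm d + (1 - 2 * tvar) * (of_nat (d - 1) * cm (d - 1))
       + (tvar ^ 2 - tvar) * (of_nat ((d - 1) * (d - 2)) * cm (d - 2))
      = of_nat (fact (j + 1)) * (a (j + 2) + (1 - 2 * tvar) * a (j + 1) + (tvar ^ 2 - tvar) * a j)"
    by (simp only: distrib_left mult.left_commute)
  then show ?thesis
    using power_diff_recurrence[of tvar j] False by (simp add: a_def)
qed

section \<open>Regrouping by the block of a fixed point\<close>

definition subsets_containing :: "'a \<Rightarrow> 'a set \<Rightarrow> 'a set set" where
  "subsets_containing a A = {B. a \<in> B \<and> B \<subseteq> A}"

lemma finite_subsets_containing [simp]: "finite A \<Longrightarrow> finite (subsets_containing a A)"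
  unfolding subsets_containing_def by (rule finite_subset[of _ "Pow A"]) auto

lemma sum_subsets_containing_swap:
  assumes "finite A" "a0 \<in> A"
  shows "(\<Sum>B\<in>subsets_containing a0 A. \<Sum>a\<in>A - B. f B a)
       = (\<Sum>a\<in>A - {a0}. \<Sum>B\<in>subsets_containing a0 (A - {a}). f B a)"
proof -
  have "(\<Sum>B\<in>subsets_containing a0 A. \<Sum>a\<in>A - B. f B a)
      = (\<Sum>(B, a)\<in>Sigma (subsets_containing a0 A) (\<lambda>B. A - B). f B a)"
    by (rule sum.Sigma) (use assms in auto)
  also have "\<dots> = (\<Sum>(a, B)\<in>Sigma (A - {a0}) (\<lambda>a. subsets_containing a0 (A - {a})). f B a)"
    by (rule sum.reindex_bij_witness[where i="\<lambda>(a, B). (B, a)" and j="\<lambda>(B, a). (a, B)"])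
       (auto simp: subsets_containing_def)
  also have "\<dots> = (\<Sum>a\<in>A - {a0}. \<Sum>B\<in>subsets_containing a0 (A - {a}). f B a)"
    by (rule sum.Sigma[symmetric]) (use assms in auto)
  finally show ?thesis .
qed

lemma sum_subsets_containing_insert:
  assumes "finite A"
  shows "(\<Sum>B\<in>subsets_containing a0 A. \<Sum>a\<in>A - B. g (card B) (insert a B))
       = (\<Sum>D\<in>subsets_containing a0 A. \<Sum>a\<in>D - {a0}. g (card D - 1) D)"
proof -
  have fin: "finite D" if "D \<in> subsets_containing a0 A" for D
    using that assms by (auto simp: subsets_containing_def intro: finite_subset)
  have "(\<Sum>B\<in>subsets_containing a0 A. \<Sum>a\<in>A - B. g (card B) (insert a B))
      = (\<Sum>(B, a)\<in>Sigma (subsets_containing a0 A) (\<lambda>B. A - B). g (card B) (insert a B))"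
    by (rule sum.Sigma) (use assms in auto)
  also have "\<dots> = (\<Sum>(D, a)\<in>Sigma (subsets_containing a0 A) (\<lambda>D. D - {a0}). g (card D - 1) D)"
    by (rule sum.reindex_bij_witness[where i="\<lambda>(D, a). (D - {a}, a)" and j="\<lambda>(B, a). (insert a B, a)"])
       (auto simp: subsets_containing_def dest: finite_subset[OF _ assms])
  also have "\<dots> = (\<Sum>D\<in>subsets_containing a0 A. \<Sum>a\<in>D - {a0}. g (card D - 1) D)"
    by (rule sum.Sigma[symmetric]) (use fin assms in auto)
  finally show ?thesis .
qed

lemma sum_subsets_containing_insert_hsmult:
  assumes "finite A"
  shows "(\<Sum>B\<in>subsets_containing a0 A. \<Sum>a\<in>A - B. hsmult (c (card B)) (h (insert a B)))
       = (\<Sum>D\<in>subsets_containing a0 A. hsmult (of_nat (card D - 1) * c (card D - 1)) (h D))"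
proof -
  have "card (D - {a0}) = card D - 1" if "D \<in> subsets_containing a0 A" for D
    using that by (auto simp: subsets_containing_def dest: finite_subset[OF _ assms])
  then show ?thesis
    using sum_subsets_containing_insert[OF assms, where g = "\<lambda>n D. hsmult (c n) (h D)"]
    by (simp add: sum_hsmult_const)
qed

lemma sum_subsets_containing_insert2_hsmult:
  assumes "finite A"
  shows "(\<Sum>B\<in>subsets_containing a0 A. \<Sum>a\<in>A - B. \<Sum>a'\<in>A - B - {a}.
            hsmult (c (card B)) (h (insert a' (insert a B))))
       = (\<Sum>D\<in>subsets_containing a0 A. hsmult (of_nat ((card D - 1) * (card D - 2)) * c (card D - 2)) (h D))"
proof -
  have card: "card (E - {a0}) = card E - 1" if "E \<in> subsets_containing a0 A" for E
    using that by (auto simp: subsets_containing_def dest: finite_subset[OF _ assms])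
  have "(\<Sum>B\<in>subsets_containing a0 A. \<Sum>a\<in>A - B. \<Sum>a'\<in>A - B - {a}.
            hsmult (c (card B)) (h (insert a' (insert a B))))
      = (\<Sum>E\<in>subsets_containing a0 A. \<Sum>a\<in>E - {a0}. \<Sum>a'\<in>A - E. hsmult (c (card E - 1)) (h (insert a' E)))"
    using sum_subsets_containing_insert[OF assms, where g = "\<lambda>n E. \<Sum>a'\<in>A - E. hsmult (c n) (h (insert a' E))"]
    by (simp add: Diff_insert[symmetric])
  also have "\<dots> = (\<Sum>E\<in>subsets_containing a0 A. \<Sum>a'\<in>A - E.
                    hsmult (of_nat (card E - 1) * c (card E - 1)) (h (insert a' E)))"
    using card by (simp add: sum.swap[where B = "A - _"] sum_hsmult_const)
  also have "\<dots> = (\<Sum>D\<in>subsets_containing a0 A. hsmult (of_nat ((card D - 1) * (card D - 2)) * c (card D - 2)) (h D))"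
    using sum_subsets_containing_insert_hsmult[OF assms, where c = "\<lambda>n. of_nat (n - 1) * c (n - 1)"]
    by (simp add: mult.assoc numeral_2_eq_2)
  finally show ?thesis .
qed

lemma sum_subsets_containing_cm_absorb:
  assumes "finite A" "a0 \<in> A"
  shows "(\<Sum>B\<in>subsets_containing a0 A. hsmult (cm (card B)) (h B))
       + hsmult (1 - 2 * tvar) (\<Sum>B\<in>subsets_containing a0 A. \<Sum>a\<in>A - B.
           hsmult (cm (card B)) (h (insert a B)))
       + hsmult (tvar ^ 2 - tvar) (\<Sum>B\<in>subsets_containing a0 A. \<Sum>a\<in>A - B. \<Sum>a'\<in>A - B - {a}.
           hsmult (cm (card B)) (h (insert a' (insert a B))))
       = h {a0}"
proof -
  have "(\<Sum>D\<in>subsets_containing a0 A. hsmult (cm (card D)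
          + (1 - 2 * tvar) * (of_nat (card D - 1) * cm (card D - 1))
          + (tvar ^ 2 - tvar) * (of_nat ((card D - 1) * (card D - 2)) * cm (card D - 2))) (h D))
      = (\<Sum>D\<in>subsets_containing a0 A. if D = {a0} then h D else 0)"
  proof (intro sum.cong refl)
    fix D assume "D \<in> subsets_containing a0 A"
    then have "card D \<ge> 1" "card D = 1 \<longleftrightarrow> D = {a0}"
      using assms(1) by (auto simp: subsets_containing_def card_1_singleton_iff Suc_le_eq card_gt_0_iff
          dest: finite_subset)
    then show "hsmult (cm (card D)
          + (1 - 2 * tvar) * (of_nat (card D - 1) * cm (card D - 1))
          + (tvar ^ 2 - tvar) * (of_nat ((card D - 1) * (card D - 2)) * cm (card D - 2))) (h D)
        = (if D = {a0} then h D else 0)"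
      unfolding cm_recurrence[OF \<open>card D \<ge> 1\<close>] by simp
  qed
  also have "\<dots> = h {a0}"
    using assms by (simp add: sum.delta' subsets_containing_def)
  finally show ?thesis
    by (simp add: sum_subsets_containing_insert_hsmult[OF assms(1)]
        sum_subsets_containing_insert2_hsmult[OF assms(1)]
        hsmult_sum_right hsmult_hsmult hsmult_add_left sum.distrib)
qed

definition zlead :: "nat list \<Rightarrow> nat set \<Rightarrow> nat set \<Rightarrow> ht" where
  "zlead ks A D = hprep (zl (sum ((!) ks) D)) (zperm ks (A - D))"

lemma tprod_zl_zperm_zlead:
  assumes "finite A" "B \<subseteq> A" "B \<noteq> {}" and pos: "\<forall>i\<in>A. ks ! i > 0"
  shows "word (zl (sum ((!) ks) B)) \<star>\<^sub>t zperm ks (A - B)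
       = zlead ks A B
       + hsmult (1 - 2 * tvar) (\<Sum>a\<in>A - B. zlead ks A (insert a B))
       + hsmult (tvar ^ 2 - tvar) (\<Sum>a\<in>A - B. \<Sum>a'\<in>A - B - {a}. zlead ks A (insert a' (insert a B)))
       + (\<Sum>a\<in>A - B. hprep (zl (ks ! a)) (word (zl (sum ((!) ks) B)) \<star>\<^sub>t zperm ks (A - B - {a})))"
proof -
  have "finite B"
    using assms finite_subset by blast
  have "sum ((!) ks) B > 0"
    using assms \<open>finite B\<close> by (intro sum_pos) (auto simp: subset_iff)
  have zlead_insert: "zlead ks A (insert a B) = hprep (zl (sum ((!) ks) B + ks ! a)) (zperm ks (A - B - {a}))"
    if "a \<in> A - B" for a
    using that \<open>finite B\<close> by (simp add: zlead_def Diff_insert[symmetric] add.commute)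
  have zlead_insert2: "zlead ks A (insert a' (insert a B))
      = hprep (zl (sum ((!) ks) B + ks ! a + ks ! a')) (zperm ks (A - B - {a} - {a'}))"
    if "a \<in> A - B" "a' \<in> A - B - {a}" for a a'
    using that \<open>finite B\<close> by (simp add: zlead_def Diff_insert[symmetric] insert_commute add_ac)
  have "finite (A - B)" "\<forall>i\<in>A - B. ks ! i > 0"
    using assms by auto
  from tprod_zl_zperm_rec[OF \<open>sum ((!) ks) B > 0\<close> this] show ?thesis
    by (simp add: zlead_insert zlead_insert2 zlead_def[of ks A B] add_ac)
qed

lemma sum_subsets_containing_first_letter:
  assumes "finite A" "a0 \<in> A"
    and expansion: "\<And>A'. A' \<subset> A \<Longrightarrow> a0 \<in> A' \<Longrightarrow> \<forall>i\<in>A'. ks ! i > 0 \<Longrightarrow>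
      (\<Sum>B\<in>subsets_containing a0 A'. hsmult (cm (card B))
         (word (zl (sum ((!) ks) B)) \<star>\<^sub>t zperm ks (A' - B))) = zperm ks A'"
    and pos: "\<forall>i\<in>A. ks ! i > 0"
  shows "(\<Sum>B\<in>subsets_containing a0 A. \<Sum>a\<in>A - B. hsmult (cm (card B))
           (hprep (zl (ks ! a)) (word (zl (sum ((!) ks) B)) \<star>\<^sub>t zperm ks (A - B - {a}))))
       = (\<Sum>a\<in>A - {a0}. hprep (zl (ks ! a)) (zperm ks (A - {a})))"
proof -
  have "(\<Sum>B\<in>subsets_containing a0 A. \<Sum>a\<in>A - B. hsmult (cm (card B))
           (hprep (zl (ks ! a)) (word (zl (sum ((!) ks) B)) \<star>\<^sub>t zperm ks (A - B - {a}))))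
      = (\<Sum>a\<in>A - {a0}. hprep (zl (ks ! a)) (\<Sum>B\<in>subsets_containing a0 (A - {a}).
          hsmult (cm (card B)) (word (zl (sum ((!) ks) B)) \<star>\<^sub>t zperm ks (A - {a} - B))))"
    by (simp add: sum_subsets_containing_swap[OF assms(1,2)] hprep_sum hprep_hsmult
        Diff_insert[symmetric] Diff_insert2[symmetric])
  also have "\<dots> = (\<Sum>a\<in>A - {a0}. hprep (zl (ks ! a)) (zperm ks (A - {a})))"
    using assms(2) pos by (intro sum.cong refl arg_cong[where f = "hprep _"] expansion) auto
  finally show ?thesis .
qed

lemma zperm_expansion:
  assumes "finite A" "a0 \<in> A" "\<forall>i\<in>A. ks ! i > 0"
  shows "(\<Sum>B\<in>subsets_containing a0 A.
            hsmult (cm (card B)) (word (zl (sum ((!) ks) B)) \<star>\<^sub>t zperm ks (A - B))) = zperm ks A"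
  using assms
proof (induction A rule: finite_psubset_induct)
  case (psubset A)
  note fin = psubset.hyps(1) and a0 = psubset.prems(1) and pos = psubset.prems(2)
  let ?z = "\<lambda>B. word (zl (sum ((!) ks) B))"
  have expand: "hsmult (cm (card B)) (?z B \<star>\<^sub>t zperm ks (A - B))
      = hsmult (cm (card B)) (zlead ks A B)
      + hsmult (1 - 2 * tvar) (\<Sum>a\<in>A - B. hsmult (cm (card B)) (zlead ks A (insert a B)))
      + hsmult (tvar ^ 2 - tvar) (\<Sum>a\<in>A - B. \<Sum>a'\<in>A - B - {a}.
          hsmult (cm (card B)) (zlead ks A (insert a' (insert a B))))
      + (\<Sum>a\<in>A - B. hsmult (cm (card B)) (hprep (zl (ks ! a)) (?z B \<star>\<^sub>t zperm ks (A - B - {a}))))"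
    if "B \<in> subsets_containing a0 A" for B
  proof -
    have B: "B \<subseteq> A" "B \<noteq> {}"
      using that by (auto simp: subsets_containing_def)
    show ?thesis
      unfolding tprod_zl_zperm_zlead[OF fin B pos]
      by (simp add: hsmult_add_right hsmult_sum_right hsmult_commute)
  qed
  have "(\<Sum>B\<in>subsets_containing a0 A. hsmult (cm (card B)) (?z B \<star>\<^sub>t zperm ks (A - B)))
      = (\<Sum>B\<in>subsets_containing a0 A. hsmult (cm (card B)) (zlead ks A B))
      + hsmult (1 - 2 * tvar) (\<Sum>B\<in>subsets_containing a0 A. \<Sum>a\<in>A - B.
          hsmult (cm (card B)) (zlead ks A (insert a B)))
      + hsmult (tvar ^ 2 - tvar) (\<Sum>B\<in>subsets_containing a0 A. \<Sum>a\<in>A - B. \<Sum>a'\<in>A - B - {a}.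
          hsmult (cm (card B)) (zlead ks A (insert a' (insert a B))))
      + (\<Sum>B\<in>subsets_containing a0 A. \<Sum>a\<in>A - B.
          hsmult (cm (card B)) (hprep (zl (ks ! a)) (?z B \<star>\<^sub>t zperm ks (A - B - {a}))))"
    by (simp only: sum.cong[OF refl expand] sum.distrib hsmult_sum_right)
  also have "\<dots> = zlead ks A {a0} + (\<Sum>a\<in>A - {a0}. hprep (zl (ks ! a)) (zperm ks (A - {a})))"
    unfolding sum_subsets_containing_cm_absorb[OF fin a0]
    using sum_subsets_containing_first_letter[OF fin a0 psubset.IH pos] by (rule arg_cong)
  also have "\<dots> = zperm ks A"
    using zperm_rec[OF fin, of ks] a0 by (force simp: zlead_def sum.remove[OF fin a0])
  finally show ?case .
qed

section \<open>Set partitions\<close>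

lemma partition_on_remove:
  assumes "partition_on A P" "B \<in> P"
  shows "partition_on (A - B) (P - {B})"
proof -
  have "disjnt B (\<Union>(P - {B}))"
    using partition_onD2[OF assms(1)] assms(2) unfolding disjoint_def disjnt_def by blast
  then show ?thesis
    using assms partition_on_insert[of B "P - {B}" A] by (simp add: insert_absorb)
qed

lemma bij_betw_insert_partition_on:
  assumes "a0 \<in> A"
  shows "bij_betw (\<lambda>(B, P). insert B P)
           (Sigma (subsets_containing a0 A) (\<lambda>B. {P. partition_on (A - B) P})) {P. partition_on A P}"
proof (rule bij_betw_imageI)
  have new_block: "B \<notin> P \<and> disjnt B (\<Union>P)" if "a0 \<in> B" "partition_on (A - B) P" for B P
    using that partition_onD1[OF that(2)] by (auto simp: disjnt_def)
  show "inj_on (\<lambda>(B, P). insert B P) (Sigma (subsets_containing a0 A) (\<lambda>B. {P. partition_on (A - B) P}))"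
  proof (rule inj_onI, clarsimp simp: subsets_containing_def)
    fix B P B' P'
    assume B: "a0 \<in> B" "partition_on (A - B) P" and B': "a0 \<in> B'" "partition_on (A - B') P'"
      and eq: "insert B P = insert B' P'"
    have "B = B'"
      using eq new_block[OF B] new_block[OF B'] B B' by (auto simp: disjnt_def)
    then show "B = B' \<and> P = P'"
      using eq new_block[OF B] new_block[OF B'] by (metis insert_ident)
  qed
  show "(\<lambda>(B, P). insert B P) ` Sigma (subsets_containing a0 A) (\<lambda>B. {P. partition_on (A - B) P})
      = {P. partition_on A P}"
  proof
    show "(\<lambda>(B, P). insert B P) ` Sigma (subsets_containing a0 A) (\<lambda>B. {P. partition_on (A - B) P})
        \<subseteq> {P. partition_on A P}"
      using new_block by (auto simp: subsets_containing_def partition_on_insert)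
    show "{P. partition_on A P}
        \<subseteq> (\<lambda>(B, P). insert B P) ` Sigma (subsets_containing a0 A) (\<lambda>B. {P. partition_on (A - B) P})"
    proof
      fix P assume "P \<in> {P. partition_on A P}"
      then have P: "partition_on A P" by simp
      then obtain B where "B \<in> P" "a0 \<in> B"
        using assms partition_onD1[OF P] by blast
      then show "P \<in> (\<lambda>(B, P). insert B P) ` Sigma (subsets_containing a0 A) (\<lambda>B. {P. partition_on (A - B) P})"
        using P partition_on_remove[OF P] partition_onD1[OF P]
        by (intro image_eqI[of _ _ "(B, P - {B})"]) (auto simp: subsets_containing_def)
    qed
  qed
qed

lemma sum_partition_on_block_containing:
  assumes "finite A" "a0 \<in> A"
  shows "(\<Sum>P | partition_on A P. g P)
       = (\<Sum>B\<in>subsets_containing a0 A. \<Sum>P | partition_on (A - B) P. g (insert B P))"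
proof -
  have "(\<Sum>P | partition_on A P. g P)
      = (\<Sum>(B, P)\<in>Sigma (subsets_containing a0 A) (\<lambda>B. {P. partition_on (A - B) P}). g (insert B P))"
    using sum.reindex_bij_betw[OF bij_betw_insert_partition_on[OF assms(2)], of g]
    by (simp add: case_prod_unfold)
  also have "\<dots> = (\<Sum>B\<in>subsets_containing a0 A. \<Sum>P | partition_on (A - B) P. g (insert B P))"
    by (rule sum.Sigma[symmetric]) (use assms in \<open>auto intro: finitely_many_partition_on\<close>)
  finally show ?thesis .
qed

lemma blocks_list_insert:
  assumes "finite A" "B \<subseteq> A" "Min A \<in> B" and P: "partition_on (A - B) P"
  shows "blocks_list (insert B P) = B # blocks_list P"
proof -
  let ?a0 = "Min A"
  have "finite P" "finite B"
    using assms finite_elements[OF _ P] by (auto intro: finite_subset)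
  have Min_block: "?a0 < Min C" if "C \<in> P" for C
  proof -
    have "C \<noteq> {}" "C \<subseteq> A - B"
      using partition_onD3[OF P] partition_onD1[OF P] that by auto
    then have "Min C \<in> A - B"
      using Min_in[of C] \<open>finite A\<close> by (meson finite_Diff finite_subset subsetD)
    then show ?thesis
      using \<open>finite A\<close> \<open>?a0 \<in> B\<close> by (metis DiffD1 DiffD2 Min_le order_le_neq_trans)
  qed
  have "Min B = ?a0"
    using assms \<open>finite B\<close> by (intro antisym Min_le Min_antimono) auto
  then have mins: "Min ` insert B P = insert ?a0 (Min ` P)" and "\<forall>m\<in>Min ` P. ?a0 < m"
    using Min_block by auto
  moreover have "Min (insert ?a0 (Min ` P)) = ?a0" "insert ?a0 (Min ` P) - {?a0} = Min ` P"
    using \<open>finite P\<close> \<open>\<forall>m\<in>Min ` P. ?a0 < m\<close> by (auto intro: Min_eqI less_imp_le)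
  ultimately have sorted: "sorted_list_of_set (Min ` insert B P) = ?a0 # sorted_list_of_set (Min ` P)"
    using \<open>finite P\<close> by (simp add: sorted_list_of_set_nonempty)
  have "(THE C. C \<in> insert B P \<and> Min C = ?a0) = B"
    using \<open>Min B = ?a0\<close> Min_block by (intro the_equality) fastforce+
  moreover have "(THE C. C \<in> insert B P \<and> Min C = m) = (THE C. C \<in> P \<and> Min C = m)"
    if "m \<in> Min ` P" for m
    using that \<open>Min B = ?a0\<close> \<open>\<forall>m\<in>Min ` P. ?a0 < m\<close> by (metis insert_iff less_irrefl)
  ultimately show ?thesis
    unfolding blocks_list_def sorted using \<open>finite P\<close> by simp
qed

definition partition_sum :: "nat list \<Rightarrow> nat set \<Rightarrow> ht" where
  "partition_sum ks A = (\<Sum>P | partition_on A P. hsmult (cPi P) (tprod_list (map (zblock ks) (blocks_list P))))"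

lemma tprod_zblock_hsmult: "zblock ks B \<star>\<^sub>t hsmult c f = hsmult c (zblock ks B \<star>\<^sub>t f)"
  by (simp add: zblock_def tprod_word_left linext_hsmult)

lemma partition_sum_rec:
  assumes "finite A" "A \<noteq> {}"
  shows "partition_sum ks A = (\<Sum>B\<in>subsets_containing (Min A) A.
           hsmult (cm (card B)) (zblock ks B \<star>\<^sub>t partition_sum ks (A - B)))"
proof -
  have "partition_sum ks A = (\<Sum>B\<in>subsets_containing (Min A) A. \<Sum>P | partition_on (A - B) P.
      hsmult (cPi (insert B P)) (tprod_list (map (zblock ks) (blocks_list (insert B P)))))"
    unfolding partition_sum_def using assms by (intro sum_partition_on_block_containing) auto
  also have "\<dots> = (\<Sum>B\<in>subsets_containing (Min A) A. \<Sum>P | partition_on (A - B) P.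
      hsmult (cm (card B)) (zblock ks B \<star>\<^sub>t hsmult (cPi P) (tprod_list (map (zblock ks) (blocks_list P)))))"
  proof (intro sum.cong refl)
    fix B P
    assume "B \<in> subsets_containing (Min A) A" "P \<in> {P. partition_on (A - B) P}"
    then have B: "B \<subseteq> A" "Min A \<in> B" and P: "partition_on (A - B) P"
      by (auto simp: subsets_containing_def)
    have "finite P"
      using assms(1) finite_elements[OF _ P] by simp
    moreover have "B \<notin> P"
      using partition_onD1[OF P] B by auto
    ultimately show "hsmult (cPi (insert B P)) (tprod_list (map (zblock ks) (blocks_list (insert B P))))
        = hsmult (cm (card B)) (zblock ks B \<star>\<^sub>t hsmult (cPi P) (tprod_list (map (zblock ks) (blocks_list P))))"
      by (simp add: blocks_list_insert[OF assms(1) B P] cPi_def tprod_list_def tprod_zblock_hsmult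
          hsmult_hsmult)
  qed
  also have "\<dots> = (\<Sum>B\<in>subsets_containing (Min A) A.
      hsmult (cm (card B)) (zblock ks B \<star>\<^sub>t partition_sum ks (A - B)))"
    by (simp add: partition_sum_def zblock_def tprod_word_left linext_sum hsmult_sum_right)
  finally show ?thesis .
qed

lemma partition_sum_eq_zperm:
  assumes "finite A" "\<forall>i\<in>A. ks ! i > 0"
  shows "partition_sum ks A = zperm ks A"
  using assms
proof (induction A rule: finite_psubset_induct)
  case (psubset A)
  show ?case
  proof (cases "A = {}")
    case True
    then show ?thesis
      by (simp add: partition_sum_def partition_on_empty cPi_def blocks_list_def tprod_list_def zword_def)
  next
    case False
    have "partition_sum ks A = (\<Sum>B\<in>subsets_containing (Min A) A.
        hsmult (cm (card B)) (zblock ks B \<star>\<^sub>t partition_sum ks (A - B)))"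
      using psubset.hyps False by (rule partition_sum_rec)
    also have "\<dots> = (\<Sum>B\<in>subsets_containing (Min A) A.
        hsmult (cm (card B)) (word (zl (sum ((!) ks) B)) \<star>\<^sub>t zperm ks (A - B)))"
    proof (intro sum.cong refl)
      fix B assume "B \<in> subsets_containing (Min A) A"
      then have "A - B \<subset> A"
        using Min_in[OF psubset.hyps False] by (auto simp: subsets_containing_def)
      then show "hsmult (cm (card B)) (zblock ks B \<star>\<^sub>t partition_sum ks (A - B))
          = hsmult (cm (card B)) (word (zl (sum ((!) ks) B)) \<star>\<^sub>t zperm ks (A - B))"
        using psubset.prems by (simp add: zblock_def psubset.IH)
    qed
    also have "\<dots> = zperm ks A"
      using psubset False by (intro zperm_expansion) auto
    finally show ?thesis .
  qed
qed

lemma bij_betw_permutes_permutations_of_set: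
  "bij_betw (\<lambda>\<sigma>. map \<sigma> [0..<n]) {\<sigma>. \<sigma> permutes {0..<n}} (permutations_of_set {0..<n})"
proof (rule bij_betw_byWitness[where f' = "\<lambda>xs i. if i < n then xs ! i else i"])
  show "\<forall>\<sigma>\<in>{\<sigma>. \<sigma> permutes {0..<n}}. (\<lambda>i. if i < n then map \<sigma> [0..<n] ! i else i) = \<sigma>"
    by (auto simp: fun_eq_iff permutes_not_in)
  show "\<forall>xs\<in>permutations_of_set {0..<n}. map (\<lambda>i. if i < n then xs ! i else i) [0..<n] = xs"
    using length_finite_permutations_of_set[where A = "{0..<n}"] by (auto intro: nth_equalityI)
  show "(\<lambda>\<sigma>. map \<sigma> [0..<n]) ` {\<sigma>. \<sigma> permutes {0..<n}} \<subseteq> permutations_of_set {0..<n}"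
    by (auto simp: permutations_of_set_def permutes_image distinct_map permutes_inj_on)
  show "(\<lambda>xs i. if i < n then xs ! i else i) ` permutations_of_set {0..<n} \<subseteq> {\<sigma>. \<sigma> permutes {0..<n}}"
  proof clarify
    fix xs assume "xs \<in> permutations_of_set {0..<n}"
    then have "set xs = {0..<n}" "distinct xs" "length xs = n"
      by (auto simp: permutations_of_set_def dest: distinct_card)
    then have "bij_betw ((!) xs) {0..<n} {0..<n}"
      by (metis bij_betw_nth atLeast0LessThan)
    then show "(\<lambda>i. if i < n then xs ! i else i) permutes {0..<n}"
      by (intro bij_imp_permutes) (auto simp: bij_betw_def inj_on_def image_def)
  qed
qed

theorem lemma3p1:
  fixes ks :: "nat list"
  assumes "\<forall>k\<in>set ks. k > 0"
  shows "(\<Sum>\<sigma>\<in>{\<sigma>. \<sigma> permutes {0..<length ks}}.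
            word (zword (map (\<lambda>i. ks ! \<sigma> i) [0..<length ks])))
       = (\<Sum>P\<in>{P. partition_on {0..<length ks} P}.
            hsmult (cPi P) (tprod_list (map (zblock ks) (blocks_list P))))"
proof -
  have "(\<Sum>\<sigma>\<in>{\<sigma>. \<sigma> permutes {0..<length ks}}. word (zword (map (\<lambda>i. ks ! \<sigma> i) [0..<length ks])))
      = zperm ks {0..<length ks}"
    unfolding zperm_def
    by (subst sum.reindex_bij_betw[OF bij_betw_permutes_permutations_of_set, symmetric]) (simp add: comp_def)
  also have "\<dots> = partition_sum ks {0..<length ks}"
    using assms by (intro partition_sum_eq_zperm[symmetric]) auto
  finally show ?thesis
    by (simp add: partition_sum_def)
qed

end
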